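(* Let $f_{n,i}$ denote the number of $i$-dimensional faces of the Whitehouse complex $\Delta_n$ ($n\ge 3$), with the convention $f_{m,j}=0$ for $j<-1$ or $j>m-4$. Then $f_{n,-1}=1$ for all $n\ge 3$, and for all $n\ge 4$ and $-1\le i\le n-4$, $$f_{n,i}=(i+2)\,f_{n-1,i}+(n+i-1)\,f_{n-1,i-1}.$$
   Context: The Whitehouse complex $\Delta_n$ ($n\ge 3$) is the simplicial complex with vertex set $V_n=\{S\subseteq\{2,\dots,n\}: 2\le |S|\le n-2\}$, in which a subset $F\subseteq V_n$ is a face iff for all $S,T\in F$ one has $S\subseteq T$, $T\subseteq S$, or $S\cap T=\emptyset$. (So $\Delta_3=\{\emptyset\}$.) A face $F$ has dimension $|F|-1$. *)

theory Defs
  imports Main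
begin

definition whitehouse_vertices :: "nat \<Rightarrow> nat set set" where
  "whitehouse_vertices n = {S. S \<subseteq> {2..n} \<and> 2 \<le> card S \<and> int (card S) \<le> int n - 2}"

definition whitehouse_face :: "nat \<Rightarrow> nat set set \<Rightarrow> bool" where
  "whitehouse_face n F \<longleftrightarrow> F \<subseteq> whitehouse_vertices n \<and>
     (\<forall>S\<in>F. \<forall>T\<in>F. S \<subseteq> T \<or> T \<subseteq> S \<or> S \<inter> T = {})"

definition whitehouse_f :: "nat \<Rightarrow> int \<Rightarrow> nat" where
  "whitehouse_f n i = (if i < -1 \<or> i > int n - 4 then 0
     else card {F. whitehouse_face n F \<and> int (card F) = i + 1})"

end

theory Submission
  imports Defs
begin

(*
  A face on a finite ground set U, i.e. a laminar family of subsets S of U with 2 <= |S| < |U|,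
  is a rooted tree: its internal nodes are the root U and the members of the face, its leaves are
  the singletons. Every face on insert a U arises from exactly one face G on U, recovered by
  deleting a, in exactly one of two ways: a becomes a new leaf below an internal node C (a is added
  to every member containing C, and the size stays |G|), or the edge above a node C, possibly the
  root, is subdivided by the new node insert a C (the size grows by one). Counting the |G| + 1
  internal nodes and the |G| + |U| + 1 nodes gives
  f(insert a U, k + 1) = (k + 2) f(U, k + 1) + (k + 1 + |U|) f(U, k),
  which for U = {2..n-1}, |U| = n - 2 and k = i is the stated recurrence.
*)

section \<open>Laminar families\<close>

definition laminar :: "'a set set \<Rightarrow> bool" where
  "laminar F \<longleftrightarrow> (\<forall>S\<in>F. \<forall>T\<in>F. S \<subseteq> T \<or> T \<subseteq> S \<or> S \<inter> T = {})"

definition nontrivial_subsets :: "'a set \<Rightarrow> 'a set set" where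
  "nontrivial_subsets U = {S. S \<subseteq> U \<and> 2 \<le> card S \<and> card S < card U}"

definition laminar_faces :: "'a set \<Rightarrow> nat \<Rightarrow> 'a set set set" where
  "laminar_faces U k = {F. F \<subseteq> nontrivial_subsets U \<and> laminar F \<and> card F = k}"

lemma laminarD: "laminar F \<Longrightarrow> S \<in> F \<Longrightarrow> T \<in> F \<Longrightarrow> S \<subseteq> T \<or> T \<subseteq> S \<or> S \<inter> T = {}"
  unfolding laminar_def by blast


lemma laminar_insert:
  "laminar (insert S F) \<longleftrightarrow> laminar F \<and> (\<forall>T\<in>F. S \<subseteq> T \<or> T \<subseteq> S \<or> S \<inter> T = {})"
  unfolding laminar_def by blast

lemma laminar_subset: "laminar F \<Longrightarrow> G \<subseteq> F \<Longrightarrow> laminar G"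
  unfolding laminar_def by blast

lemma laminar_image_Diff: "laminar F \<Longrightarrow> laminar ((\<lambda>D. D - A) ` F)"
  unfolding laminar_def by blast

lemma finite_nontrivial_subsets: "finite (nontrivial_subsets U)"
proof (cases "finite U")
  case True
  have "nontrivial_subsets U \<subseteq> Pow U"
    by (auto simp: nontrivial_subsets_def)
  with True show ?thesis
    by (simp add: finite_subset)
qed (simp add: nontrivial_subsets_def)

lemma finite_laminar_faces: "finite (laminar_faces U k)"
proof -
  have "laminar_faces U k \<subseteq> Pow (nontrivial_subsets U)"
    by (auto simp: laminar_faces_def)
  then show ?thesis
    by (simp add: finite_nontrivial_subsets finite_subset)
qed

lemma laminar_facesD:
  assumes "F \<in> laminar_faces U k"
  shows "F \<subseteq> nontrivial_subsets U" "laminar F" "card F = k" "finite F"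
  using assms finite_subset[OF _ finite_nontrivial_subsets] by (auto simp: laminar_faces_def)

lemma laminar_faces_0: "laminar_faces U 0 = {{}}"
proof -
  have "F = {}" if "F \<subseteq> nontrivial_subsets U" and "card F = 0" for F
    using that finite_subset[OF _ finite_nontrivial_subsets] card_0_eq by blast
  then show ?thesis
    by (auto simp: laminar_faces_def laminar_def)
qed

definition insert_into :: "'a \<Rightarrow> ('a set \<Rightarrow> bool) \<Rightarrow> 'a set set \<Rightarrow> 'a set set" where
  "insert_into a P G = (\<lambda>D. if P D then insert a D else D) ` G"

lemma remove_insert_into:
  assumes "a \<notin> \<Union>G"
  shows "(\<lambda>D. D - {a}) ` insert_into a P G = G"
proof -
  have "(if P D then insert a D else D) - {a} = D" if "D \<in> G" for D
    using that assms by auto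
  then show ?thesis
    unfolding insert_into_def image_image by simp
qed

lemma card_insert_into:
  assumes "a \<notin> \<Union>G"
  shows "card (insert_into a P G) = card G"
proof -
  have "inj_on (\<lambda>D. if P D then insert a D else D) G"
    by (rule inj_on_inverseI[where g = "\<lambda>D. D - {a}"]) (use assms in auto)
  then show ?thesis
    unfolding insert_into_def by (rule card_image)
qed

lemma insert_mem_insert_into_iff:
  assumes "a \<notin> \<Union>G" and "a \<notin> E"
  shows "insert a E \<in> insert_into a P G \<longleftrightarrow> E \<in> G \<and> P E"
proof
  assume "insert a E \<in> insert_into a P G"
  then obtain D where "D \<in> G" and D: "insert a E = (if P D then insert a D else D)"
    unfolding insert_into_def by blast
  with assms have "P D" and "insert a E = insert a D"
    by (auto split: if_splits)
  with \<open>D \<in> G\<close> assms show "E \<in> G \<and> P E"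
    by (metis Diff_insert_absorb UnionI)
qed (auto simp: insert_into_def)

lemma laminar_insert_into:
  assumes "laminar G" and "a \<notin> \<Union>G"
    and upward: "\<And>D E. D \<in> G \<Longrightarrow> E \<in> G \<Longrightarrow> P D \<Longrightarrow> D \<subseteq> E \<Longrightarrow> P E"
    and meet: "\<And>D E. D \<in> G \<Longrightarrow> E \<in> G \<Longrightarrow> P D \<Longrightarrow> P E \<Longrightarrow> D \<inter> E \<noteq> {}"
  shows "laminar (insert_into a P G)"
  unfolding laminar_def insert_into_def
proof (intro ballI, elim imageE)
  fix S T D E
  assume S: "S = (if P D then insert a D else D)" and D: "D \<in> G"
    and T: "T = (if P E then insert a E else E)" and E: "E \<in> G"
  have "D \<subseteq> E \<or> E \<subseteq> D \<or> D \<inter> E = {}"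
    using laminarD[OF \<open>laminar G\<close> D E] .
  moreover have "a \<notin> D" "a \<notin> E"
    using assms(2) D E by auto
  ultimately show "S \<subseteq> T \<or> T \<subseteq> S \<or> S \<inter> T = {}"
    unfolding S T using upward[OF D E] upward[OF E D] meet[OF D E] by auto
qed

lemma insert_into_remove:
  assumes "\<And>D. D \<in> F \<Longrightarrow> a \<in> D \<longleftrightarrow> P (D - {a})"
  shows "insert_into a P ((\<lambda>D. D - {a}) ` F) = F"
proof -
  have "(if P (D - {a}) then insert a (D - {a}) else D - {a}) = D" if "D \<in> F" for D
    using assms[OF that] by auto
  then show ?thesis
    unfolding insert_into_def image_image by simp
qed

section \<open>Adding a point to the ground set\<close>

locale point_extension =
  fixes U :: "'a set" and a :: 'a
  assumes finite_U: "finite U" and a_notin_U: "a \<notin> U" and two_le_card_U: "2 \<le> card U"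
begin

definition internal_nodes :: "'a set set \<Rightarrow> 'a set set" where
  "internal_nodes G = insert U G"

definition nodes :: "'a set set \<Rightarrow> 'a set set" where
  "nodes G = insert U (G \<union> (\<lambda>x. {x}) ` U)"

definition attach :: "'a set \<Rightarrow> 'a set set \<Rightarrow> 'a set set" where
  "attach C G = insert_into a ((\<subseteq>) C) G"

(* Above the root, the new root insert a U is not a vertex; only the old root U becomes one. *)
definition subdivide :: "'a set \<Rightarrow> 'a set set \<Rightarrow> 'a set set" where
  "subdivide C G =
     (if C = U then insert U G else insert (insert a C) (insert_into a ((\<subset>) C) G))"

definition deletion :: "'a set set \<Rightarrow> 'a set set" where
  "deletion F = (\<lambda>D. D - {a}) ` F \<inter> nontrivial_subsets U"

lemma card_insert_a_U: "card (insert a U) = Suc (card U)"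
  using finite_U a_notin_U by simp

lemma nontrivial_subsets_insert_iff:
  "S \<in> nontrivial_subsets (insert a U) \<longleftrightarrow> S \<subseteq> insert a U \<and> 2 \<le> card S \<and> card S \<le> card U"
  unfolding nontrivial_subsets_def card_insert_a_U by auto

lemma nontrivial_subset_iff:
  assumes "S \<subseteq> U"
  shows "S \<in> nontrivial_subsets U \<longleftrightarrow> 2 \<le> card S \<and> S \<noteq> U"
  using assms finite_U psubset_card_mono[of U S]
  by (auto simp: nontrivial_subsets_def)

lemma U_notin_nontrivial_subsets: "U \<notin> nontrivial_subsets U"
  by (simp add: nontrivial_subsets_def)

lemma face_memberD:
  assumes "G \<in> laminar_faces U k" and "D \<in> G"
  shows "D \<subseteq> U" "finite D" "2 \<le> card D" "card D < card U" "a \<notin> D" "D \<noteq> U"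
proof -
  have "D \<in> nontrivial_subsets U"
    using assms unfolding laminar_faces_def by blast
  then show "D \<subseteq> U" "2 \<le> card D" "card D < card U"
    unfolding nontrivial_subsets_def by auto
  then show "finite D" "a \<notin> D" "D \<noteq> U"
    using finite_U a_notin_U finite_subset by auto
qed

lemma face_insert_memberD:
  assumes "F \<in> laminar_faces (insert a U) k" and "D \<in> F"
  shows "D \<subseteq> insert a U" "finite D" "2 \<le> card D" "card D \<le> card U"
proof -
  have "D \<in> nontrivial_subsets (insert a U)"
    using assms unfolding laminar_faces_def by blast
  then show "D \<subseteq> insert a U" "2 \<le> card D" "card D \<le> card U"
    unfolding nontrivial_subsets_insert_iff by auto
  then show "finite D"
    using finite_U finite_subset by auto
qed

lemma card_internal_nodes:
  assumes "G \<in> laminar_faces U k"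
  shows "card (internal_nodes G) = Suc k"
proof -
  have "U \<notin> G"
    using face_memberD(6)[OF assms] by blast
  then show ?thesis
    unfolding internal_nodes_def using laminar_facesD(3,4)[OF assms] by simp
qed

lemma card_nodes:
  assumes G: "G \<in> laminar_faces U k"
  shows "card (nodes G) = Suc (k + card U)"
proof -
  note G' = laminar_facesD[OF G]
  have "card ((\<lambda>x. {x}) ` U) = card U"
    by (rule card_image) (simp add: inj_on_def)
  moreover have "G \<inter> (\<lambda>x. {x}) ` U = {}"
    using face_memberD(3)[OF G] by fastforce
  ultimately have "card (G \<union> (\<lambda>x. {x}) ` U) = k + card U"
    using G'(3,4) finite_U by (simp add: card_Un_disjoint)
  moreover have "U \<notin> G \<union> (\<lambda>x. {x}) ` U"
    using face_memberD(6)[OF G] two_le_card_U by auto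
  ultimately show ?thesis
    unfolding nodes_def using G'(4) finite_U by simp
qed

lemma nodeD:
  assumes G: "G \<in> laminar_faces U k" and C: "C \<in> nodes G"
  shows "C \<subseteq> U" "C \<noteq> {}" "a \<notin> C" "\<And>D. D \<in> G \<Longrightarrow> D \<subseteq> C \<or> C \<subseteq> D \<or> D \<inter> C = {}"
proof -
  show "C \<subseteq> U" "C \<noteq> {}"
    using C face_memberD(1,3)[OF G] two_le_card_U unfolding nodes_def by fastforce+
  then show "a \<notin> C"
    using a_notin_U by blast
  show "D \<subseteq> C \<or> C \<subseteq> D \<or> D \<inter> C = {}" if "D \<in> G" for D
  proof -
    have "D \<noteq> {x}" for x
      using face_memberD(3)[OF G that] by auto
    then show ?thesis
      using C that face_memberD(1)[OF G that] laminarD[OF laminar_facesD(2)[OF G]]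
      unfolding nodes_def by blast
  qed
qed

lemma internal_nodes_subset_nodes: "internal_nodes G \<subseteq> nodes G"
  unfolding internal_nodes_def nodes_def by blast

lemma a_notin_Union_face: "G \<in> laminar_faces U k \<Longrightarrow> a \<notin> \<Union>G"
  using face_memberD(5) by blast

lemma face_member_nontrivial_insert:
  assumes "G \<in> laminar_faces U k" and "D \<in> G"
  shows "D \<in> nontrivial_subsets (insert a U)" "insert a D \<in> nontrivial_subsets (insert a U)"
  using face_memberD[OF assms] unfolding nontrivial_subsets_insert_iff by auto

lemma insert_into_face_subset:
  assumes "G \<in> laminar_faces U k"
  shows "insert_into a P G \<subseteq> nontrivial_subsets (insert a U)"
  unfolding insert_into_def using face_member_nontrivial_insert[OF assms] by auto

lemma attach_in_laminar_faces:
  assumes G: "G \<in> laminar_faces U k" and C: "C \<in> internal_nodes G"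
  shows "attach C G \<in> laminar_faces (insert a U) k"
proof -
  have C': "C \<in> nodes G"
    using C internal_nodes_subset_nodes by blast
  have "laminar (attach C G)"
    unfolding attach_def
  proof (rule laminar_insert_into)
    show "laminar G"
      using laminar_facesD(2)[OF G] .
    show "D \<inter> E \<noteq> {}" if "C \<subseteq> D" "C \<subseteq> E" for D E
      using that nodeD(2)[OF G C'] by blast
  qed (use a_notin_Union_face[OF G] in auto)
  moreover have "attach C G \<subseteq> nontrivial_subsets (insert a U)"
    unfolding attach_def by (rule insert_into_face_subset[OF G])
  moreover have "card (attach C G) = k"
    unfolding attach_def using laminar_facesD(3)[OF G] a_notin_Union_face[OF G]
    by (simp add: card_insert_into)
  ultimately show ?thesis
    unfolding laminar_faces_def by blast
qed

lemma insert_a_node_nontrivial: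
  assumes G: "G \<in> laminar_faces U k" and C: "C \<in> nodes G" "C \<noteq> U"
  shows "insert a C \<in> nontrivial_subsets (insert a U)"
proof -
  note CU = nodeD[OF G C(1)]
  have "finite C"
    using finite_subset[OF CU(1) finite_U] .
  then have "card C < card U" "card C \<noteq> 0" "card (insert a C) = Suc (card C)"
    using CU(1-3) C(2) finite_U by (auto simp: psubset_card_mono)
  then show ?thesis
    unfolding nontrivial_subsets_insert_iff using CU(1) by auto
qed

lemma subdivide_in_laminar_faces:
  assumes G: "G \<in> laminar_faces U k" and C: "C \<in> nodes G"
  shows "subdivide C G \<in> laminar_faces (insert a U) (Suc k)"
proof (cases "C = U")
  case True
  have "laminar (insert U G)"
    unfolding laminar_insert using laminar_facesD(2)[OF G] face_memberD(1)[OF G] by blast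
  moreover have "U \<in> nontrivial_subsets (insert a U)"
    unfolding nontrivial_subsets_insert_iff using two_le_card_U by blast
  then have "insert U G \<subseteq> nontrivial_subsets (insert a U)"
    using face_member_nontrivial_insert(1)[OF G] by blast
  moreover have "U \<notin> G"
    using face_memberD(6)[OF G] by blast
  then have "card (insert U G) = Suc k"
    using laminar_facesD(3,4)[OF G] by simp
  ultimately show ?thesis
    using True unfolding subdivide_def laminar_faces_def by simp
next
  case False
  note CU = nodeD[OF G C]
  have "laminar (insert_into a ((\<subset>) C) G)"
  proof (rule laminar_insert_into)
    show "D \<inter> E \<noteq> {}" if "C \<subset> D" "C \<subset> E" for D E
      using that CU(2) by blast
  qed (use laminar_facesD(2)[OF G] a_notin_Union_face[OF G] in auto)
  moreover have "\<forall>T \<in> insert_into a ((\<subset>) C) G.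
      insert a C \<subseteq> T \<or> T \<subseteq> insert a C \<or> insert a C \<inter> T = {}"
    using CU(4) face_memberD(5)[OF G] unfolding insert_into_def by auto
  ultimately have "laminar (insert (insert a C) (insert_into a ((\<subset>) C) G))"
    unfolding laminar_insert by blast
  then have "laminar (subdivide C G)"
    unfolding subdivide_def using False by simp
  moreover have "subdivide C G \<subseteq> nontrivial_subsets (insert a U)"
    unfolding subdivide_def
    using False insert_a_node_nontrivial[OF G C False] insert_into_face_subset[OF G] by simp
  moreover have "insert a C \<notin> insert_into a ((\<subset>) C) G"
    using insert_mem_insert_into_iff[OF a_notin_Union_face[OF G] CU(3)] by blast
  then have "card (subdivide C G) = Suc k"
    unfolding subdivide_def using False laminar_facesD(3)[OF G] a_notin_Union_face[OF G]
      finite_subset[OF insert_into_face_subset[OF G] finite_nontrivial_subsets]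
    by (simp add: card_insert_into)
  ultimately show ?thesis
    unfolding laminar_faces_def by blast
qed

lemma deletion_attach:
  assumes "G \<in> laminar_faces U k"
  shows "deletion (attach C G) = G"
  using assms remove_insert_into[OF a_notin_Union_face[OF assms]]
  unfolding deletion_def attach_def laminar_faces_def by auto

lemma deletion_subdivide:
  assumes G: "G \<in> laminar_faces U k" and C: "C \<in> nodes G"
  shows "deletion (subdivide C G) = G"
proof -
  have GU: "G \<subseteq> nontrivial_subsets U"
    using G unfolding laminar_faces_def by blast
  have G_remove: "(\<lambda>D. D - {a}) ` G = G"
    using a_notin_Union_face[OF G] by force
  show ?thesis
  proof (cases "C = U")
    case True
    then show ?thesis
      unfolding deletion_def subdivide_def
      using G_remove GU U_notin_nontrivial_subsets a_notin_U by auto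
  next
    case False
    have "(\<lambda>D. D - {a}) ` subdivide C G = insert C G"
      unfolding subdivide_def using False nodeD(3)[OF G C]
        remove_insert_into[OF a_notin_Union_face[OF G]] by simp
    moreover have "C \<in> G" if "C \<in> nontrivial_subsets U"
      using that C False unfolding nodes_def nontrivial_subsets_def by auto
    ultimately show ?thesis
      unfolding deletion_def using GU by auto
  qed
qed

lemma inj_on_attach:
  assumes G: "G \<in> laminar_faces U k"
  shows "inj_on (\<lambda>C. attach C G) (internal_nodes G)"
proof (rule inj_onI)
  fix C1 C2
  assume C1: "C1 \<in> internal_nodes G" and C2: "C2 \<in> internal_nodes G"
    and eq: "attach C1 G = attach C2 G"
  have up_eq: "C1 \<subseteq> D \<longleftrightarrow> C2 \<subseteq> D" if "D \<in> G" for D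
  proof -
    note iff = insert_mem_insert_into_iff[OF a_notin_Union_face[OF G] face_memberD(5)[OF G that]]
    have "insert a D \<in> attach C1 G \<longleftrightarrow> insert a D \<in> attach C2 G"
      using eq by simp
    then show ?thesis
      unfolding attach_def iff using that by simp
  qed
  have "\<not> U \<subseteq> D" if "D \<in> G" for D
    using face_memberD(1,6)[OF G that] by blast
  then show "C1 = C2"
    using C1 C2 up_eq[of C1] up_eq[of C2] unfolding internal_nodes_def by blast
qed

lemma insert_mem_subdivide_iff:
  assumes G: "G \<in> laminar_faces U k" and C: "C \<in> nodes G" and "a \<notin> E"
  shows "insert a E \<in> subdivide C G \<longleftrightarrow> C \<noteq> U \<and> (E = C \<or> E \<in> G \<and> C \<subset> E)"
proof (cases "C = U")
  case True
  then show ?thesis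
    unfolding subdivide_def using a_notin_U a_notin_Union_face[OF G] by auto
next
  case False
  then show ?thesis
    unfolding subdivide_def
    using insert_ident[OF \<open>a \<notin> E\<close> nodeD(3)[OF G C]]
      insert_mem_insert_into_iff[OF a_notin_Union_face[OF G] \<open>a \<notin> E\<close>]
    by simp
qed

lemma inj_on_subdivide:
  assumes G: "G \<in> laminar_faces U k"
  shows "inj_on (\<lambda>C. subdivide C G) (nodes G)"
proof (rule inj_onI)
  fix C1 C2
  assume C1: "C1 \<in> nodes G" and C2: "C2 \<in> nodes G" and eq: "subdivide C1 G = subdivide C2 G"
  note iff = insert_mem_subdivide_iff[OF G]
  have "C1 \<noteq> U \<longleftrightarrow> C2 \<noteq> U \<and> (C1 = C2 \<or> C1 \<in> G \<and> C2 \<subset> C1)"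
    using iff[OF C1 nodeD(3)[OF G C1]] iff[OF C2 nodeD(3)[OF G C1]] eq by simp
  moreover have "C2 \<noteq> U \<longleftrightarrow> C1 \<noteq> U \<and> (C2 = C1 \<or> C2 \<in> G \<and> C1 \<subset> C2)"
    using iff[OF C2 nodeD(3)[OF G C2]] iff[OF C1 nodeD(3)[OF G C2]] eq by simp
  ultimately show "C1 = C2"
    by blast
qed

lemma deletion_in_laminar_faces:
  assumes "F \<in> laminar_faces (insert a U) k"
  shows "deletion F \<in> laminar_faces U (card (deletion F))"
proof -
  have "laminar ((\<lambda>D. D - {a}) ` F)"
    using laminar_image_Diff[OF laminar_facesD(2)[OF assms]] .
  then have "laminar (deletion F)"
    unfolding deletion_def by (rule laminar_subset) blast
  then show ?thesis
    unfolding laminar_faces_def deletion_def by blast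
qed

lemma member_Diff_nontrivial:
  assumes F: "F \<in> laminar_faces (insert a U) k" and "D \<in> F" "D \<noteq> U" "2 \<le> card (D - {a})"
  shows "D - {a} \<in> nontrivial_subsets U"
proof -
  note D = face_insert_memberD[OF F \<open>D \<in> F\<close>]
  have "D - {a} \<noteq> U"
  proof (cases "a \<in> D")
    case True
    then have "card (D - {a}) < card U"
      using D(2-4) by simp
    then show ?thesis
      by blast
  qed (use \<open>D \<noteq> U\<close> in simp)
  moreover have "D - {a} \<subseteq> U"
    using D(1) by blast
  ultimately show ?thesis
    using nontrivial_subset_iff assms(4) by blast
qed

lemma member_avoiding_a_nontrivial:
  assumes F: "F \<in> laminar_faces (insert a U) k" and "D \<in> F" "a \<notin> D" "D \<noteq> U"
  shows "D \<in> nontrivial_subsets U"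
  using member_Diff_nontrivial[OF assms(1,2,4)] face_insert_memberD(3)[OF assms(1,2)] assms(3)
  by simp

lemma face_containing_U_avoids_a:
  assumes F: "F \<in> laminar_faces (insert a U) k" and "U \<in> F" "D \<in> F"
  shows "a \<notin> D"
proof
  assume "a \<in> D"
  note D = face_insert_memberD[OF F \<open>D \<in> F\<close>]
  have "D \<subseteq> U \<or> U \<subseteq> D \<or> D \<inter> U = {}"
    using laminarD[OF laminar_facesD(2)[OF F] assms(3,2)] .
  moreover have "\<not> D \<subseteq> U"
    using \<open>a \<in> D\<close> a_notin_U by blast
  moreover have "\<not> U \<subseteq> D"
  proof
    assume "U \<subseteq> D"
    then have "card (insert a U) \<le> card D"
      using \<open>a \<in> D\<close> D(2) by (simp add: card_mono)
    then show False
      using D(4) card_insert_a_U by simp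
  qed
  moreover have "D \<inter> U \<noteq> {}"
  proof
    assume "D \<inter> U = {}"
    then have "card D \<le> card {a}"
      using D(1) by (intro card_mono) auto
    then show False
      using D(3) by simp
  qed
  ultimately show False
    by blast
qed

lemma face_containing_U:
  assumes F: "F \<in> laminar_faces (insert a U) k" and "U \<in> F"
  shows "F = subdivide U (deletion F)"
proof -
  have no_a: "a \<notin> D" if "D \<in> F" for D
    using face_containing_U_avoids_a[OF F \<open>U \<in> F\<close> that] .
  have "D \<in> nontrivial_subsets U \<longleftrightarrow> D \<noteq> U" if "D \<in> F" for D
    using member_avoiding_a_nontrivial[OF F that no_a[OF that]] U_notin_nontrivial_subsets by blast
  moreover have "(\<lambda>D. D - {a}) ` F = F"
    using no_a by force
  ultimately have "deletion F = F - {U}"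
    unfolding deletion_def by auto
  then show ?thesis
    unfolding subdivide_def using \<open>U \<in> F\<close> by auto
qed

lemma face_avoiding_a:
  assumes F: "F \<in> laminar_faces (insert a U) k" and "U \<notin> F" and no_a: "\<forall>D\<in>F. a \<notin> D"
  shows "F = attach U (deletion F)"
proof -
  have nontrivial: "D \<in> nontrivial_subsets U" if "D \<in> F" for D
    using member_avoiding_a_nontrivial[OF F that] no_a that \<open>U \<notin> F\<close> by blast
  have image: "(\<lambda>D. D - {a}) ` F = F"
    using no_a by force
  have "insert_into a ((\<subseteq>) U) ((\<lambda>D. D - {a}) ` F) = F"
  proof (rule insert_into_remove)
    show "a \<in> D \<longleftrightarrow> U \<subseteq> D - {a}" if "D \<in> F" for D
      using nontrivial[OF that] no_a that unfolding nontrivial_subsets_def by auto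
  qed
  moreover have "deletion F = (\<lambda>D. D - {a}) ` F"
    unfolding deletion_def image using nontrivial by blast
  ultimately show ?thesis
    unfolding attach_def by simp
qed

lemma least_a_set_exists:
  assumes F: "F \<in> laminar_faces (insert a U) k" and "\<exists>D\<in>F. a \<in> D"
  obtains R where "insert a R \<in> F" "a \<notin> R" "\<And>D. D \<in> F \<Longrightarrow> a \<in> D \<Longrightarrow> insert a R \<subseteq> D"
proof -
  obtain C where C: "C \<in> F" "a \<in> C"
    and minimal: "\<And>D. D \<in> F \<Longrightarrow> a \<in> D \<Longrightarrow> D \<subseteq> C \<Longrightarrow> C = D"
    using finite_has_minimal[of "{D \<in> F. a \<in> D}"] laminar_facesD(4)[OF F] assms(2) by auto
  have least: "C \<subseteq> D" if "D \<in> F" "a \<in> D" for D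
  proof -
    have "C \<subseteq> D \<or> D \<subseteq> C \<or> C \<inter> D = {}"
      using laminarD[OF laminar_facesD(2)[OF F] C(1) that(1)] .
    then show ?thesis
      using minimal[OF that] C(2) that(2) by blast
  qed
  have "insert a (C - {a}) = C"
    using C(2) by blast
  then show ?thesis
    using that[of "C - {a}"] C(1) least by simp
qed

(*
  insert a R is the least member of F containing a. It subdivides the edge above R when R is a node
  of the tree of F (a member of F or a singleton); otherwise a was attached at R.
*)
context
  fixes F k R
  assumes F: "F \<in> laminar_faces (insert a U) k"
    and least_in_F: "insert a R \<in> F" and a_notin_R: "a \<notin> R"
    and least: "\<And>D. D \<in> F \<Longrightarrow> a \<in> D \<Longrightarrow> insert a R \<subseteq> D"
begin

lemma least_a_set_facts: "R \<subseteq> U" "R \<noteq> {}" "R \<noteq> U" "U \<notin> F" "finite R"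
proof -
  note C = face_insert_memberD[OF F least_in_F]
  show "R \<subseteq> U"
    using C(1) a_notin_R by blast
  then show "finite R"
    using finite_U finite_subset by blast
  show "R \<noteq> {}"
    using C(3) by (rule contrapos_pn) simp
  show "R \<noteq> U"
  proof
    assume "R = U"
    then show False
      using C(4) card_insert_a_U by simp
  qed
  show "U \<notin> F"
    using face_containing_U_avoids_a[OF F _ least_in_F] by blast
qed

lemma avoiding_member_vs_least:
  assumes "D \<in> F" "a \<notin> D"
  shows "D \<subseteq> R \<or> D \<inter> R = {}"
  using laminarD[OF laminar_facesD(2)[OF F] least_in_F assms(1)] assms(2) by auto

lemma member_above_least_iff:
  assumes "D \<in> F" "D \<noteq> insert a R"
  shows "a \<in> D \<longleftrightarrow> R \<subset> D - {a}"
proof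
  assume "a \<in> D"
  then show "R \<subset> D - {a}"
    using least[OF \<open>D \<in> F\<close>] assms(2) a_notin_R by blast
next
  assume "R \<subset> D - {a}"
  show "a \<in> D"
  proof (rule ccontr)
    assume "a \<notin> D"
    then have "R \<subset> D"
      using \<open>R \<subset> D - {a}\<close> by simp
    moreover have "D \<subseteq> R \<or> D \<inter> R = {}"
      using avoiding_member_vs_least[OF \<open>D \<in> F\<close> \<open>a \<notin> D\<close>] .
    ultimately show False
      using least_a_set_facts(2) by blast
  qed
qed

lemma member_Diff_a_nontrivial:
  assumes "D \<in> F" "D \<noteq> insert a R"
  shows "D - {a} \<in> nontrivial_subsets U"
proof (rule member_Diff_nontrivial[OF F \<open>D \<in> F\<close>])
  show "D \<noteq> U"
    using assms(1) least_a_set_facts(4) by auto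
  show "2 \<le> card (D - {a})"
  proof (cases "a \<in> D")
    case True
    then have "card R < card (D - {a})"
      using member_above_least_iff[OF assms] face_insert_memberD(2)[OF F \<open>D \<in> F\<close>]
        psubset_card_mono by blast
    moreover have "card R \<noteq> 0"
      using least_a_set_facts(2,5) by simp
    ultimately show ?thesis
      by linarith
  qed (use face_insert_memberD(3)[OF F \<open>D \<in> F\<close>] in simp)
qed

lemma least_a_set_subdivide:
  assumes "R \<in> F \<or> card R = 1"
  shows "F = subdivide R (deletion F)"
proof -
  define F' where "F' = F - {insert a R}"
  have image: "(\<lambda>D. D - {a}) ` F' = deletion F"
  proof
    show "(\<lambda>D. D - {a}) ` F' \<subseteq> deletion F"
      unfolding deletion_def F'_def using member_Diff_a_nontrivial by blast
    show "deletion F \<subseteq> (\<lambda>D. D - {a}) ` F'"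
    proof
      fix E
      assume "E \<in> deletion F"
      then obtain D where D: "D \<in> F" "E = D - {a}" and E: "E \<in> nontrivial_subsets U"
        unfolding deletion_def by blast
      show "E \<in> (\<lambda>D. D - {a}) ` F'"
      proof (cases "D = insert a R")
        case True
        then have "E = R"
          using D(2) a_notin_R by simp
        then have "R \<in> F'" and "R = R - {a}"
          using E assms a_notin_R unfolding F'_def nontrivial_subsets_def by auto
        then show ?thesis
          using \<open>E = R\<close> by blast
      next
        case False
        then show ?thesis
          using D unfolding F'_def by blast
      qed
    qed
  qed
  have "F' = insert_into a ((\<subset>) R) (deletion F)"
    using insert_into_remove[of F' a "(\<subset>) R"] member_above_least_iff image
    unfolding F'_def by simp
  then show ?thesis
    unfolding subdivide_def F'_def using least_a_set_facts(3) least_in_F by auto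
qed

lemma least_a_set_node:
  assumes "R \<in> F \<or> card R = 1"
  shows "R \<in> nodes (deletion F)"
  using assms
proof
  assume "R \<in> F"
  moreover have "R - {a} = R"
    using a_notin_R by simp
  ultimately have "R \<in> deletion F"
    using member_Diff_nontrivial[OF F \<open>R \<in> F\<close> least_a_set_facts(3)]
      face_insert_memberD(3)[OF F \<open>R \<in> F\<close>]
    unfolding deletion_def by (metis IntI image_eqI)
  then show ?thesis
    unfolding nodes_def by blast
next
  assume "card R = 1"
  then show ?thesis
    unfolding nodes_def using least_a_set_facts(1) by (auto simp: card_1_singleton_iff)
qed

lemma least_a_set_attach:
  assumes "R \<notin> F" "card R \<noteq> 1"
  shows "R \<in> internal_nodes (deletion F)" "F = attach R (deletion F)"
proof -
  note R = least_a_set_facts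
  have R_nontrivial: "R \<in> nontrivial_subsets U"
  proof -
    have "card R \<noteq> 0"
      using R(2,5) by simp
    then show ?thesis
      using nontrivial_subset_iff[OF R(1)] R(3) assms(2) by simp
  qed
  have split: "a \<in> D \<longleftrightarrow> R \<subseteq> D - {a}" if "D \<in> F" for D
  proof
    assume "a \<in> D"
    then show "R \<subseteq> D - {a}"
      using least[OF that] a_notin_R by blast
  next
    assume "R \<subseteq> D - {a}"
    show "a \<in> D"
    proof (rule ccontr)
      assume "a \<notin> D"
      then have "R \<subseteq> D"
        using \<open>R \<subseteq> D - {a}\<close> by simp
      moreover have "D \<noteq> R"
        using that assms(1) by blast
      moreover have "D \<subseteq> R \<or> D \<inter> R = {}"
        using avoiding_member_vs_least[OF that \<open>a \<notin> D\<close>] .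
      ultimately show False
        using R(2) by blast
    qed
  qed
  have "D - {a} \<in> nontrivial_subsets U" if "D \<in> F" for D
    using member_Diff_a_nontrivial[OF that] R_nontrivial a_notin_R by (cases "D = insert a R") auto
  then have image: "(\<lambda>D. D - {a}) ` F = deletion F"
    unfolding deletion_def by blast
  show "F = attach R (deletion F)"
    unfolding attach_def using insert_into_remove[of F a "(\<subseteq>) R"] split image by simp
  have "insert a R - {a} \<in> deletion F"
    using image least_in_F by blast
  then show "R \<in> internal_nodes (deletion F)"
    unfolding internal_nodes_def using a_notin_R by simp
qed

end

lemma face_decomposition:
  assumes F: "F \<in> laminar_faces (insert a U) k"
  obtains C where "C \<in> internal_nodes (deletion F)" "F = attach C (deletion F)"
    | C where "C \<in> nodes (deletion F)" "F = subdivide C (deletion F)"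
proof -
  consider "U \<in> F" | "U \<notin> F" "\<forall>D\<in>F. a \<notin> D" | "\<exists>D\<in>F. a \<in> D"
    by blast
  then show ?thesis
  proof cases
    case 1
    then show ?thesis
      using that(2) face_containing_U[OF F] unfolding nodes_def by blast
  next
    case 2
    then show ?thesis
      using that(1) face_avoiding_a[OF F] unfolding internal_nodes_def by blast
  next
    case 3
    then obtain R where R: "insert a R \<in> F" "a \<notin> R" "\<And>D. D \<in> F \<Longrightarrow> a \<in> D \<Longrightarrow> insert a R \<subseteq> D"
      using least_a_set_exists[OF F] by blast
    show ?thesis
    proof (cases "R \<in> F \<or> card R = 1")
      case True
      then show ?thesis
        using that(2) least_a_set_node[OF F R True] least_a_set_subdivide[OF F R True] by blast
    next
      case False
      then show ?thesis
        using that(1) least_a_set_attach[OF F R] by blast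
    qed
  qed
qed

lemma deletion_in_laminar_faces_Suc:
  assumes F: "F \<in> laminar_faces (insert a U) (Suc k)"
  shows "deletion F \<in> laminar_faces U (Suc k) \<union> laminar_faces U k"
proof -
  let ?G = "deletion F"
  have G: "?G \<in> laminar_faces U (card ?G)"
    by (rule deletion_in_laminar_faces[OF F])
  show ?thesis
  proof (rule face_decomposition[OF F])
    fix C
    assume C: "C \<in> internal_nodes ?G" and "F = attach C ?G"
    then have "F \<in> laminar_faces (insert a U) (card ?G)"
      using attach_in_laminar_faces[OF G C] by simp
    then show ?thesis
      using F G by (simp add: laminar_faces_def)
  next
    fix C
    assume C: "C \<in> nodes ?G" and "F = subdivide C ?G"
    then have "F \<in> laminar_faces (insert a U) (Suc (card ?G))"
      using subdivide_in_laminar_faces[OF G C] by simp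
    then show ?thesis
      using F G by (simp add: laminar_faces_def)
  qed
qed

lemma fiber_deletion_attach:
  assumes G: "G \<in> laminar_faces U (Suc k)"
  shows "{F \<in> laminar_faces (insert a U) (Suc k). deletion F = G} = (\<lambda>C. attach C G) ` internal_nodes G"
proof (intro equalityI subsetI)
  fix F
  assume "F \<in> {F \<in> laminar_faces (insert a U) (Suc k). deletion F = G}"
  then have F: "F \<in> laminar_faces (insert a U) (Suc k)" and "deletion F = G"
    by auto
  show "F \<in> (\<lambda>C. attach C G) ` internal_nodes G"
  proof (rule face_decomposition[OF F])
    fix C
    assume "C \<in> internal_nodes (deletion F)" "F = attach C (deletion F)"
    then show ?thesis
      using \<open>deletion F = G\<close> by blast
  next
    fix C
    assume "C \<in> nodes (deletion F)" and "F = subdivide C (deletion F)"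
    then have "F \<in> laminar_faces (insert a U) (Suc (Suc k))"
      using subdivide_in_laminar_faces[OF G, of C] \<open>deletion F = G\<close> by simp
    then show ?thesis
      using F by (simp add: laminar_faces_def)
  qed
qed (use attach_in_laminar_faces[OF G] deletion_attach[OF G] in auto)

lemma fiber_deletion_subdivide:
  assumes G: "G \<in> laminar_faces U k"
  shows "{F \<in> laminar_faces (insert a U) (Suc k). deletion F = G} = (\<lambda>C. subdivide C G) ` nodes G"
proof (intro equalityI subsetI)
  fix F
  assume "F \<in> {F \<in> laminar_faces (insert a U) (Suc k). deletion F = G}"
  then have F: "F \<in> laminar_faces (insert a U) (Suc k)" and "deletion F = G"
    by auto
  show "F \<in> (\<lambda>C. subdivide C G) ` nodes G"
  proof (rule face_decomposition[OF F])
    fix C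
    assume "C \<in> internal_nodes (deletion F)" and "F = attach C (deletion F)"
    then have "F \<in> laminar_faces (insert a U) k"
      using attach_in_laminar_faces[OF G, of C] \<open>deletion F = G\<close> by simp
    then show ?thesis
      using F by (simp add: laminar_faces_def)
  next
    fix C
    assume "C \<in> nodes (deletion F)" "F = subdivide C (deletion F)"
    then show ?thesis
      using \<open>deletion F = G\<close> by blast
  qed
qed (use subdivide_in_laminar_faces[OF G] deletion_subdivide[OF G] in auto)

theorem card_laminar_faces_insert:
  "card (laminar_faces (insert a U) (Suc k)) =
     (k + 2) * card (laminar_faces U (Suc k)) + (Suc k + card U) * card (laminar_faces U k)"
proof -
  let ?fiber = "\<lambda>G. {F \<in> laminar_faces (insert a U) (Suc k). deletion F = G}"
  have deletion_maps: "deletion ` laminar_faces (insert a U) (Suc k) \<subseteq>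
      laminar_faces U (Suc k) \<union> laminar_faces U k"
    using deletion_in_laminar_faces_Suc by blast
  have "card (laminar_faces (insert a U) (Suc k)) =
      (\<Sum>G \<in> laminar_faces U (Suc k) \<union> laminar_faces U k. card (?fiber G))"
    using sum.group[OF finite_laminar_faces finite_UnI[OF finite_laminar_faces finite_laminar_faces]
        deletion_maps, of "\<lambda>_. 1 :: nat"]
    by simp
  also have "\<dots> = (\<Sum>G \<in> laminar_faces U (Suc k). card (?fiber G)) + (\<Sum>G \<in> laminar_faces U k. card (?fiber G))"
    by (rule sum.union_disjoint[OF finite_laminar_faces finite_laminar_faces])
      (auto simp: laminar_faces_def)
  also have "(\<Sum>G \<in> laminar_faces U (Suc k). card (?fiber G)) = (\<Sum>G \<in> laminar_faces U (Suc k). k + 2)"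
    by (rule sum.cong)
      (simp_all add: fiber_deletion_attach card_image inj_on_attach card_internal_nodes)
  also have "(\<Sum>G \<in> laminar_faces U k. card (?fiber G)) = (\<Sum>G \<in> laminar_faces U k. Suc k + card U)"
    by (rule sum.cong)
      (simp_all add: fiber_deletion_subdivide card_image inj_on_subdivide card_nodes)
  finally show ?thesis
    by (simp add: mult.commute)
qed

end

lemma laminar_faces_Suc_small:
  assumes "card U \<le> 2"
  shows "laminar_faces U (Suc k) = {}"
proof -
  have "nontrivial_subsets U = {}"
    using assms unfolding nontrivial_subsets_def by auto
  then show ?thesis
    unfolding laminar_faces_def by auto
qed

lemma laminar_faces_Suc_eq_empty:
  assumes "finite U" and "card U \<le> Suc (Suc k)"
  shows "laminar_faces U (Suc k) = {}"
  using assms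
proof (induction U arbitrary: k rule: finite_induct)
  case empty
  then show ?case
    by (simp add: laminar_faces_Suc_small)
next
  case (insert x U)
  show ?case
  proof (cases "2 \<le> card U")
    case False
    then show ?thesis
      using insert.hyps by (simp add: laminar_faces_Suc_small)
  next
    case True
    interpret point_extension U x
      using insert.hyps True by unfold_locales
    obtain k' where k: "k = Suc k'"
      using True insert.prems insert.hyps by (cases k) auto
    have "laminar_faces U (Suc k) = {}" "laminar_faces U k = {}"
      using insert.IH insert.prems insert.hyps k by simp_all
    then have "card (laminar_faces (insert x U) (Suc k)) = 0"
      using card_laminar_faces_insert[of k] by simp
    then show ?thesis
      using card_0_eq[OF finite_laminar_faces] by blast
  qed
qed

section \<open>The Whitehouse complex\<close>

lemma whitehouse_face_iff: "whitehouse_face n F \<longleftrightarrow> F \<subseteq> nontrivial_subsets {2..n} \<and> laminar F"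
proof -
  have "whitehouse_vertices n = nontrivial_subsets {2..n}"
    unfolding whitehouse_vertices_def nontrivial_subsets_def by (rule Collect_cong) auto
  then show ?thesis
    unfolding whitehouse_face_def laminar_def by simp
qed

lemma whitehouse_f_eq_card:
  assumes "3 \<le> n" and "-1 \<le> i"
  shows "whitehouse_f n i = card (laminar_faces {2..n} (nat (i + 1)))"
proof (cases "i > int n - 4")
  case True
  then have "nat (i + 1) = Suc (nat i)" and "card {2..n} \<le> Suc (Suc (nat i))"
    using assms by auto
  then show ?thesis
    unfolding whitehouse_f_def using True laminar_faces_Suc_eq_empty[of "{2..n}" "nat i"] by simp
next
  case False
  have "{F. whitehouse_face n F \<and> int (card F) = i + 1} = laminar_faces {2..n} (nat (i + 1))"
    unfolding laminar_faces_def whitehouse_face_iff using assms(2) by auto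
  then show ?thesis
    unfolding whitehouse_f_def using False assms by simp
qed

lemma whitehouse_f_recurrence:
  assumes "4 \<le> n"
  shows "int (whitehouse_f n (int k)) =
    (int k + 2) * int (whitehouse_f (n - 1) (int k))
    + (int n + int k - 1) * int (whitehouse_f (n - 1) (int k - 1))"
proof -
  interpret point_extension "{2..n - 1}" n
    using assms by unfold_locales auto
  have "insert n {2..n - 1} = {2..n}" and "Suc k + card {2..n - 1} = k + n - 1"
    and "int (k + n - 1) = int n + int k - 1"
    using assms by auto
  moreover have "whitehouse_f n (int k) = card (laminar_faces {2..n} (Suc k))"
    and "whitehouse_f (n - 1) (int k) = card (laminar_faces {2..n - 1} (Suc k))"
    and "whitehouse_f (n - 1) (int k - 1) = card (laminar_faces {2..n - 1} k)"
    using assms by (simp_all add: whitehouse_f_eq_card nat_add_distrib)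
  ultimately show ?thesis
    using arg_cong[OF card_laminar_faces_insert[of k], of int]
    by (simp only: of_nat_add of_nat_mult of_nat_numeral)
qed

theorem mainTheorem5:
  shows "(\<forall>n::nat. n \<ge> 3 \<longrightarrow> whitehouse_f n (-1) = 1) \<and>
         (\<forall>(n::nat) (i::int). n \<ge> 4 \<longrightarrow> -1 \<le> i \<longrightarrow> i \<le> int n - 4 \<longrightarrow>
            int (whitehouse_f n i) =
              (i + 2) * int (whitehouse_f (n - 1) i)
              + (int n + i - 1) * int (whitehouse_f (n - 1) (i - 1)))"
proof (intro conjI allI impI)
  fix n :: nat
  assume "n \<ge> 3"
  then show "whitehouse_f n (-1) = 1"
    by (simp add: whitehouse_f_eq_card laminar_faces_0)
next
  fix n :: nat and i :: int
  assume n: "n \<ge> 4" and "-1 \<le> i" "i \<le> int n - 4"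
  show "int (whitehouse_f n i) =
      (i + 2) * int (whitehouse_f (n - 1) i) + (int n + i - 1) * int (whitehouse_f (n - 1) (i - 1))"
  proof (cases "i = -1")
    case True
    then show ?thesis
      using n by (simp add: whitehouse_f_eq_card laminar_faces_0 whitehouse_f_def[of _ "-2"])
  next
    case False
    then obtain k where "i = int k"
      using \<open>-1 \<le> i\<close> nonneg_int_cases[of i] by force
    then show ?thesis
      using whitehouse_f_recurrence[OF n, of k] by simp
  qed
qed

end
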